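(* Let $\Gamma=(V,m,\tau)$ be a weak $W$-graph and let $A\subseteq\Delta$. The following are equivalent: (1) there is some $v\in V$ with $\tau(v)=A$; (2) the operator $Q(\Delta\setminus A)R(A)$ is nonzero on $\mathbb{C}V$; (3) the trace of $Q(\Delta\setminus A)R(A)$ on $\mathbb{C}V$ is nonzero; (4) the trace of $R(A)Q(\Delta\setminus A)$ on $\mathbb{C}V$ is nonzero.
   Context: $W$ is a Weyl group with a fixed set $\Delta$ of simple roots; for a root $\alpha$, $s_\alpha$ is the reflection in the hyperplane orthogonal to $\alpha$, and $\operatorname{sgn}$ is the sign character of $W$. A weak $W$-graph is a triple $\Gamma=(V,m,\tau)$ where $V$ is a finite set, $m:V\times V\to\mathbb{C}$ is a map, and $\tau$ is a map from $V$ to the power set of $\Delta$, such that the linear maps $s_\alpha:\mathbb{C}V\to\mathbb{C}V$ ($\alpha\in\Delta$) given on basis vectors by $s_\alpha(v)=-v$ if $\alpha\in\tau(v)$ and $s_\alpha(v)=v-\sum_{u\in V,\ \alpha\in\tau(u)} m(u,v)u$ if $\alpha\notin\tau(v)$ define a representation of $W$ on $\mathbb{C}V$. For $B\subseteq\Delta$, $W(B)$ is the subgroup generated by $\{s_\alpha:\alpha\in B\}$, and $Q(B)=\frac{1}{|W(B)|}\sum_{g\in W(B)}g$, $R(B)=\frac{1}{|W(B)|}\sum_{g\in W(B)}\operatorname{sgn}(g)g$, elements of the group algebra $\mathbb{C}[W]$ acting on $\mathbb{C}V$. *)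

theory Defs
  imports "HOL-Analysis.Analysis"
begin

definition refl :: "real^'n \<Rightarrow> real^'n \<Rightarrow> real^'n" where
  "refl \<alpha> x = x - ((2 * (x \<bullet> \<alpha>)) / (\<alpha> \<bullet> \<alpha>)) *\<^sub>R \<alpha>"

definition root_system :: "(real^'n) set \<Rightarrow> bool" where
  "root_system \<Phi> \<longleftrightarrow> finite \<Phi> \<and> 0 \<notin> \<Phi> \<and>
     (\<forall>\<alpha>\<in>\<Phi>. \<forall>\<beta>\<in>\<Phi>. refl \<alpha> \<beta> \<in> \<Phi>) \<and>
     (\<forall>\<alpha>\<in>\<Phi>. \<forall>\<beta>\<in>\<Phi>. 2 * (\<beta> \<bullet> \<alpha>) / (\<alpha> \<bullet> \<alpha>) \<in> \<int>) \<and>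
     (\<forall>\<alpha>\<in>\<Phi>. \<forall>c::real. c *\<^sub>R \<alpha> \<in> \<Phi> \<longrightarrow> c = 1 \<or> c = -1)"

definition simple_system :: "(real^'n) set \<Rightarrow> (real^'n) set \<Rightarrow> bool" where
  "simple_system \<Phi> \<Delta> \<longleftrightarrow> \<Delta> \<subseteq> \<Phi> \<and> independent \<Delta> \<and>
     (\<forall>\<beta>\<in>\<Phi>. \<exists>c::real^'n \<Rightarrow> real. (\<forall>\<alpha>\<in>\<Delta>. c \<alpha> \<in> \<int>) \<and>
        ((\<forall>\<alpha>\<in>\<Delta>. c \<alpha> \<ge> 0) \<or> (\<forall>\<alpha>\<in>\<Delta>. c \<alpha> \<le> 0)) \<and>
        \<beta> = (\<Sum>\<alpha>\<in>\<Delta>. c \<alpha> *\<^sub>R \<alpha>))"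

text \<open>The subgroup of maps generated by the reflections in the vectors of S
  (reflections are involutions, so closure under composition suffices).\<close>
inductive_set refl_group :: "(real^'n) set \<Rightarrow> (real^'n \<Rightarrow> real^'n) set"
  for S :: "(real^'n) set" where
  id_in: "id \<in> refl_group S"
| step: "g \<in> refl_group S \<Longrightarrow> \<alpha> \<in> S \<Longrightarrow> refl \<alpha> \<circ> g \<in> refl_group S"

abbreviation weyl_group :: "(real^'n) set \<Rightarrow> (real^'n \<Rightarrow> real^'n) set" where
  "weyl_group \<Phi> \<equiv> refl_group \<Phi>"

abbreviation parabolic :: "(real^'n) set \<Rightarrow> (real^'n \<Rightarrow> real^'n) set" where
  "parabolic B \<equiv> refl_group B"

text \<open>The sign character of W (the determinant; equals -1 on every reflection).\<close>
definition sgnW :: "(real^'n \<Rightarrow> real^'n) \<Rightarrow> real" where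
  "sgnW g = det (matrix g)"

text \<open>An operator on CV is encoded by its matrix M, where M u v is the
  coefficient of basis vector u in the image of basis vector v (u, v in V).\<close>
definition mat_mult :: "'v set \<Rightarrow> ('v \<Rightarrow> 'v \<Rightarrow> complex) \<Rightarrow> ('v \<Rightarrow> 'v \<Rightarrow> complex)
    \<Rightarrow> ('v \<Rightarrow> 'v \<Rightarrow> complex)" where
  "mat_mult V M N = (\<lambda>u v. \<Sum>w\<in>V. M u w * N w v)"

definition mat_id :: "'v \<Rightarrow> 'v \<Rightarrow> complex" where
  "mat_id = (\<lambda>u v. if u = v then 1 else 0)"

definition mat_eq_on :: "'v set \<Rightarrow> ('v \<Rightarrow> 'v \<Rightarrow> complex) \<Rightarrow> ('v \<Rightarrow> 'v \<Rightarrow> complex) \<Rightarrow> bool" where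
  "mat_eq_on V M N \<longleftrightarrow> (\<forall>u\<in>V. \<forall>v\<in>V. M u v = N u v)"

definition mat_trace :: "'v set \<Rightarrow> ('v \<Rightarrow> 'v \<Rightarrow> complex) \<Rightarrow> complex" where
  "mat_trace V M = (\<Sum>v\<in>V. M v v)"

definition mat_nonzero :: "'v set \<Rightarrow> ('v \<Rightarrow> 'v \<Rightarrow> complex) \<Rightarrow> bool" where
  "mat_nonzero V M \<longleftrightarrow> (\<exists>u\<in>V. \<exists>v\<in>V. M u v \<noteq> 0)"

text \<open>Matrix of the operator s_alpha defined by the triple (V, m, tau):
  s_alpha(v) = -v if alpha in tau(v), and
  s_alpha(v) = v - sum over u in V with alpha in tau(u) of m(u,v) u otherwise.\<close>
definition wg_gen :: "('v \<Rightarrow> 'v \<Rightarrow> complex) \<Rightarrow> ('v \<Rightarrow> (real^'n) set) \<Rightarrow> real^'n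
    \<Rightarrow> ('v \<Rightarrow> 'v \<Rightarrow> complex)" where
  "wg_gen m \<tau> \<alpha> = (\<lambda>u v.
     if \<alpha> \<in> \<tau> v then (if u = v then -1 else 0)
     else (if u = v then 1 else 0) - (if \<alpha> \<in> \<tau> u then m u v else 0))"

definition wg_rep :: "(real^'n) set \<Rightarrow> (real^'n) set \<Rightarrow> 'v set \<Rightarrow> ('v \<Rightarrow> 'v \<Rightarrow> complex)
    \<Rightarrow> ('v \<Rightarrow> (real^'n) set) \<Rightarrow> ((real^'n \<Rightarrow> real^'n) \<Rightarrow> 'v \<Rightarrow> 'v \<Rightarrow> complex) \<Rightarrow> bool" where
  "wg_rep \<Phi> \<Delta> V m \<tau> \<rho> \<longleftrightarrow>
     mat_eq_on V (\<rho> id) mat_id \<and>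
     (\<forall>g\<in>weyl_group \<Phi>. \<forall>h\<in>weyl_group \<Phi>. mat_eq_on V (\<rho> (g \<circ> h)) (mat_mult V (\<rho> g) (\<rho> h))) \<and>
     (\<forall>\<alpha>\<in>\<Delta>. mat_eq_on V (\<rho> (refl \<alpha>)) (wg_gen m \<tau> \<alpha>))"

definition weak_W_graph :: "(real^'n) set \<Rightarrow> (real^'n) set \<Rightarrow> 'v set \<Rightarrow> ('v \<Rightarrow> 'v \<Rightarrow> complex)
    \<Rightarrow> ('v \<Rightarrow> (real^'n) set) \<Rightarrow> bool" where
  "weak_W_graph \<Phi> \<Delta> V m \<tau> \<longleftrightarrow> finite V \<and> (\<forall>v\<in>V. \<tau> v \<subseteq> \<Delta>) \<and> (\<exists>\<rho>. wg_rep \<Phi> \<Delta> V m \<tau> \<rho>)"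

definition Qop :: "((real^'n \<Rightarrow> real^'n) \<Rightarrow> 'v \<Rightarrow> 'v \<Rightarrow> complex) \<Rightarrow> (real^'n) set
    \<Rightarrow> ('v \<Rightarrow> 'v \<Rightarrow> complex)" where
  "Qop \<rho> B = (\<lambda>u v. (1 / of_nat (card (parabolic B))) * (\<Sum>g\<in>parabolic B. \<rho> g u v))"

definition Rop :: "((real^'n \<Rightarrow> real^'n) \<Rightarrow> 'v \<Rightarrow> 'v \<Rightarrow> complex) \<Rightarrow> (real^'n) set
    \<Rightarrow> ('v \<Rightarrow> 'v \<Rightarrow> complex)" where
  "Rop \<rho> B = (\<lambda>u v. (1 / of_nat (card (parabolic B))) *
                (\<Sum>g\<in>parabolic B. of_real (sgnW g) * \<rho> g u v))"

end

(*
  If tau(v) = A, then for g in W(Delta - A) the row of v in rho(g) is the unit row (no simple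
  reflection of Delta - A lies in tau(v)), and for g in W(A) the column of v is sgn(g) times the
  unit column; hence the (v,v) entry of Q(Delta - A) R(A) is 1. Conversely each term of an entry of
  this product passes through some basis vector w: R(A) kills it unless A is contained in tau(w),
  and Q(Delta - A) kills it unless tau(w) misses Delta - A.
  For the trace, averaging over W gives an invariant positive definite Hermitian form for which
  Q and R are self-adjoint idempotents. The adjoint of QR is then RQ, so tr(QR) = tr(QR RQ) is a
  sum of squared norms and vanishes only if QR = 0.
*)

theory Submission
  imports Defs "HOL-Library.Complex_Order"
begin

section \<open>Finite groups of maps and their real characters\<close>

definition map_group :: "('a \<Rightarrow> 'a) set \<Rightarrow> bool" where
  "map_group G \<longleftrightarrow> finite G \<and> id \<in> G \<and> (\<forall>g\<in>G. \<forall>h\<in>G. g \<circ> h \<in> G) \<and> (\<forall>g\<in>G. bij g \<and> inv g \<in> G)"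

definition real_character :: "('a \<Rightarrow> 'a) set \<Rightarrow> (('a \<Rightarrow> 'a) \<Rightarrow> real) \<Rightarrow> bool" where
  "real_character G \<psi> \<longleftrightarrow> (\<forall>g\<in>G. \<forall>h\<in>G. \<psi> (g \<circ> h) = \<psi> g * \<psi> h) \<and> (\<forall>g\<in>G. \<bar>\<psi> g\<bar> = 1)"

lemma map_group_inv:
  assumes "map_group G" "g \<in> G"
  shows "inv g \<in> G" "inv g \<circ> g = id" "g \<circ> inv g = id"
proof -
  have "bij g" "inv g \<in> G" using assms unfolding map_group_def by auto
  then show "inv g \<in> G" "inv g \<circ> g = id" "g \<circ> inv g = id"
    by (simp_all add: bij_is_inj bij_is_surj surj_iff[THEN iffD1])
qed

lemma map_group_comp: "map_group G \<Longrightarrow> g \<in> G \<Longrightarrow> h \<in> G \<Longrightarrow> g \<circ> h \<in> G"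
  unfolding map_group_def by blast

lemma map_group_sum_comp_left:
  assumes "map_group G" "h \<in> G"
  shows "(\<Sum>g\<in>G. F (h \<circ> g)) = sum F G"
proof (rule sum.reindex_bij_betw, rule bij_betw_byWitness[where f' = "\<lambda>g. inv h \<circ> g"])
  show "\<forall>g\<in>G. inv h \<circ> (h \<circ> g) = g" "\<forall>g\<in>G. h \<circ> (inv h \<circ> g) = g"
    using map_group_inv[OF assms] by (simp_all add: o_assoc)
  show "(\<lambda>g. h \<circ> g) ` G \<subseteq> G" "(\<lambda>g. inv h \<circ> g) ` G \<subseteq> G"
    using assms map_group_inv[OF assms] map_group_comp[OF assms(1)] by auto
qed

lemma map_group_sum_comp_right:
  assumes "map_group G" "h \<in> G"
  shows "(\<Sum>g\<in>G. F (g \<circ> h)) = sum F G"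
proof (rule sum.reindex_bij_betw, rule bij_betw_byWitness[where f' = "\<lambda>g. g \<circ> inv h"])
  show "\<forall>g\<in>G. g \<circ> h \<circ> inv h = g" "\<forall>g\<in>G. g \<circ> inv h \<circ> h = g"
    using map_group_inv[OF assms] by (simp_all add: o_assoc[symmetric])
  show "(\<lambda>g. g \<circ> h) ` G \<subseteq> G" "(\<lambda>g. g \<circ> inv h) ` G \<subseteq> G"
    using assms map_group_inv[OF assms] map_group_comp[OF assms(1)] by auto
qed

lemma map_group_sum_inv:
  assumes "map_group G"
  shows "(\<Sum>g\<in>G. F (inv g)) = sum F G"
proof (rule sum.reindex_bij_betw, rule bij_betw_byWitness[where f' = inv])
  have "bij g \<and> inv g \<in> G" if "g \<in> G" for g
    using assms that unfolding map_group_def by blast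
  then show "\<forall>g\<in>G. inv (inv g) = g" "\<forall>g\<in>G. inv (inv g) = g" "inv ` G \<subseteq> G" "inv ` G \<subseteq> G"
    by (auto simp: inv_inv_eq)
qed

lemma real_character_one: "real_character G (\<lambda>_. 1)"
  unfolding real_character_def by simp

lemma real_character_mult:
  "real_character G \<psi> \<Longrightarrow> g \<in> G \<Longrightarrow> h \<in> G \<Longrightarrow> \<psi> (g \<circ> h) = \<psi> g * \<psi> h"
  unfolding real_character_def by blast

lemma real_character_mult_self:
  "real_character G \<psi> \<Longrightarrow> g \<in> G \<Longrightarrow> \<psi> g * \<psi> g = 1"
  unfolding real_character_def using abs_mult_self_eq[of "\<psi> g"] by simp

lemma real_character_inv:
  assumes G: "map_group G" and \<psi>: "real_character G \<psi>" and g: "g \<in> G"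
  shows "\<psi> (inv g) = \<psi> g"
proof -
  have "id \<in> G" using G unfolding map_group_def by blast
  then have "\<psi> id = 1"
    using real_character_mult[OF \<psi>, of id id] real_character_mult_self[OF \<psi>] by simp
  then have "\<psi> (inv g) * \<psi> g = 1"
    using real_character_mult[OF \<psi> map_group_inv(1)[OF G g] g] map_group_inv(2)[OF G g] by simp
  then have "\<psi> (inv g) = \<psi> (inv g) * (\<psi> g * \<psi> g)"
    using real_character_mult_self[OF \<psi> g] by simp
  also have "\<dots> = \<psi> g"
    using \<open>\<psi> (inv g) * \<psi> g = 1\<close> by (simp add: mult.assoc[symmetric])
  finally show ?thesis .
qed

lemma real_character_comp_left:
  assumes "real_character G \<psi>" "g \<in> G" "h \<in> G"
  shows "\<psi> g = \<psi> h * \<psi> (h \<circ> g)"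
  using real_character_mult[OF assms(1,3,2)] real_character_mult_self[OF assms(1,3)]
  by (simp add: mult.assoc[symmetric])

lemma real_character_comp_right:
  assumes "real_character G \<psi>" "g \<in> G" "h \<in> G"
  shows "\<psi> g = \<psi> (g \<circ> h) * \<psi> h"
  using real_character_mult[OF assms] real_character_mult_self[OF assms(1,3)]
  by (simp add: mult.assoc)

section \<open>Reflections and Weyl groups\<close>

lemma linear_refl: "linear (refl a)"
  unfolding refl_def
  by (rule linearI) (auto simp: algebra_simps add_divide_distrib)

lemma refl_scaleR: "c \<noteq> 0 \<Longrightarrow> refl (c *\<^sub>R a) = refl a"
  unfolding refl_def by (rule ext) simp

lemma refl_refl: "a \<noteq> 0 \<Longrightarrow> refl a \<circ> refl a = id"
  unfolding refl_def by (rule ext) (simp add: algebra_simps)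

lemma refl_comp_orthogonal_transformation:
  assumes "orthogonal_transformation f"
  shows "refl (f a) \<circ> f = f \<circ> refl a"
proof -
  have "linear f" "\<And>v w. f v \<bullet> f w = v \<bullet> w"
    using assms unfolding orthogonal_transformation_def by blast+
  then show ?thesis unfolding refl_def by (intro ext) (simp add: linear_diff linear_scale)
qed

lemma det_matrix_refl_axis: "det (matrix (refl (axis k (1::real))) :: real^'n^'n) = -1"
proof -
  have "(matrix (refl (axis k (1::real))) :: real^'n^'n) $ i $ j
      = (if i = j then (if i = k then -1 else 1) else 0)" for i j
    unfolding matrix_def refl_def by (simp add: inner_axis_axis; simp add: axis_def)
  then have "det (matrix (refl (axis k (1::real))) :: real^'n^'n) = (\<Prod>i\<in>UNIV. if i = k then -1 else 1)"
    by (subst det_diagonal) auto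
  then show ?thesis by (simp add: prod.If_cases)
qed

text \<open>Every reflection is conjugate, by an orthogonal map, to a reflection in a coordinate axis.\<close>
lemma det_matrix_refl:
  fixes a :: "real^'n"
  assumes "a \<noteq> 0"
  shows "det (matrix (refl a)) = -1"
proof -
  fix k :: 'n
  let ?e = "norm a *\<^sub>R axis k (1::real)"
  obtain f where f: "orthogonal_transformation f" "f ?e = a"
    using orthogonal_transformation_exists[of ?e a] by auto
  have lf: "linear f" using f(1) orthogonal_transformation by blast
  have "refl a \<circ> f = f \<circ> refl (axis k 1)"
    using refl_comp_orthogonal_transformation[OF f(1), of ?e] f(2) assms by (simp add: refl_scaleR)
  then have "det (matrix (refl a)) * det (matrix f) = det (matrix f) * det (matrix (refl (axis k (1::real))))"
    by (metis det_mul matrix_compose lf linear_refl)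
  moreover have "det (matrix f) \<noteq> 0" using orthogonal_transformation_det[OF f(1)] by auto
  ultimately show ?thesis
    using det_matrix_refl_axis[of k] by (metis mult.commute mult_minus1 mult_right_cancel)
qed

lemma refl_in_refl_group: "a \<in> S \<Longrightarrow> refl a \<in> refl_group S"
  using refl_group.step[OF refl_group.id_in, of a S] by simp

lemma refl_group_mono: "g \<in> refl_group S \<Longrightarrow> S \<subseteq> T \<Longrightarrow> g \<in> refl_group T"
  by (induction g rule: refl_group.induct) (auto intro: refl_group.intros)

lemma refl_group_comp: "g \<in> refl_group S \<Longrightarrow> h \<in> refl_group S \<Longrightarrow> g \<circ> h \<in> refl_group S"
proof (induction g rule: refl_group.induct)
  case (step g a)
  have "refl a \<circ> (g \<circ> h) \<in> refl_group S"
    using refl_group.step[OF step.IH[OF step.prems] step.hyps(2)] .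
  then show ?case by (simp only: o_assoc)
qed simp

lemma refl_group_linear: "g \<in> refl_group S \<Longrightarrow> linear g"
proof (induction g rule: refl_group.induct)
  case id_in
  then show ?case by (rule linear_id)
next
  case (step g a)
  then show ?case by (metis linear_compose linear_refl)
qed

lemma refl_group_inverse:
  assumes "g \<in> refl_group S" "0 \<notin> S"
  shows "\<exists>g'\<in>refl_group S. g' \<circ> g = id \<and> g \<circ> g' = id"
  using assms
proof (induction g rule: refl_group.induct)
  case id_in
  show ?case by (rule bexI[of _ id]) (simp_all add: refl_group.id_in)
next
  case (step g a)
  obtain g' where g': "g' \<in> refl_group S" "g' \<circ> g = id" "g \<circ> g' = id"
    using step.IH step.prems by blast
  have "a \<noteq> 0" using step.hyps(2) step.prems by auto
  then have aa: "refl a \<circ> refl a = id" by (rule refl_refl)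
  have "(g' \<circ> refl a) \<circ> (refl a \<circ> g) = g' \<circ> (refl a \<circ> refl a) \<circ> g"
    "(refl a \<circ> g) \<circ> (g' \<circ> refl a) = refl a \<circ> (g \<circ> g') \<circ> refl a"
    by (simp_all only: comp_assoc)
  then have "(g' \<circ> refl a) \<circ> (refl a \<circ> g) = id" "(refl a \<circ> g) \<circ> (g' \<circ> refl a) = id"
    using g'(2,3) aa by simp_all
  moreover have "g' \<circ> refl a \<in> refl_group S"
    using refl_group_comp[OF g'(1) refl_in_refl_group[OF step.hyps(2)]] .
  ultimately show ?case by blast
qed

text \<open>An element of the Weyl group is determined by the permutation it induces on the roots,
  because it fixes the orthogonal complement of their span.\<close>
lemma finite_weyl_group:
  assumes "root_system \<Phi>"
  shows "finite (weyl_group \<Phi>)"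
proof -
  have perm: "g ` \<Phi> \<subseteq> \<Phi>" if "g \<in> weyl_group \<Phi>" for g
    using that
  proof (induction g rule: refl_group.induct)
    case (step g a)
    then show ?case using assms unfolding root_system_def by auto
  qed simp
  have fix_orth: "g z = z" if "g \<in> weyl_group \<Phi>" "\<And>a. a \<in> \<Phi> \<Longrightarrow> z \<bullet> a = 0" for g z
    using that by (induction g rule: refl_group.induct) (auto simp: refl_def)
  have "inj_on (\<lambda>g. restrict g \<Phi>) (weyl_group \<Phi>)"
  proof (rule inj_onI)
    fix g h assume g: "g \<in> weyl_group \<Phi>" and h: "h \<in> weyl_group \<Phi>" and eq: "restrict g \<Phi> = restrict h \<Phi>"
    show "g = h"
    proof
      fix x
      obtain y z where yz: "y \<in> span \<Phi>" "\<And>w. w \<in> span \<Phi> \<Longrightarrow> orthogonal z w" "x = y + z"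
        using orthogonal_subspace_decomp_exists[of \<Phi> x] by blast
      have "g y = h y"
        using linear_eq_on_span[OF refl_group_linear[OF g] refl_group_linear[OF h] _ yz(1)] eq
        by (metis restrict_apply')
      moreover have "g z = z" "h z = z"
        using fix_orth g h yz(2) span_base unfolding orthogonal_def by blast+
      ultimately show "g x = h x"
        using yz(3) linear_add[OF refl_group_linear[OF g]] linear_add[OF refl_group_linear[OF h]] by simp
    qed
  qed
  moreover have "(\<lambda>g. restrict g \<Phi>) ` weyl_group \<Phi> \<subseteq> (\<Pi>\<^sub>E a\<in>\<Phi>. \<Phi>)"
    using perm by (auto simp: image_subset_iff)
  moreover have "finite (\<Pi>\<^sub>E a\<in>\<Phi>. \<Phi>)"
    using assms by (simp add: finite_PiE root_system_def)
  ultimately show ?thesis by (meson finite_imageD finite_subset)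
qed

lemma map_group_refl_group:
  assumes "finite (refl_group S)" "0 \<notin> S"
  shows "map_group (refl_group S)"
proof -
  have "bij g \<and> inv g \<in> refl_group S" if g: "g \<in> refl_group S" for g
  proof -
    obtain g' where "g' \<in> refl_group S" "g' \<circ> g = id" "g \<circ> g' = id"
      using refl_group_inverse[OF g assms(2)] by blast
    then show ?thesis using inv_unique_comp o_bij by metis
  qed
  then show ?thesis
    using assms(1) unfolding map_group_def by (auto intro: refl_group.id_in refl_group_comp)
qed

lemma sgnW_comp: "linear f \<Longrightarrow> linear g \<Longrightarrow> sgnW (f \<circ> g) = sgnW f * sgnW g"
  unfolding sgnW_def by (simp add: matrix_compose det_mul)

lemma sgnW_id: "sgnW id = 1"
  by (simp add: sgnW_def matrix_id_mat_1)

lemma sgnW_refl: "a \<noteq> 0 \<Longrightarrow> sgnW (refl a) = -1"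
  unfolding sgnW_def by (rule det_matrix_refl)

lemma real_character_sgnW:
  assumes "0 \<notin> S"
  shows "real_character (refl_group S) sgnW"
proof -
  have "\<bar>sgnW g\<bar> = 1" if "g \<in> refl_group S" for g
    using that
  proof (induction g rule: refl_group.induct)
    case id_in
    show ?case by (simp only: sgnW_id abs_one)
  next
    case (step g a)
    have "a \<noteq> 0" using step.hyps(2) assms by blast
    then have "sgnW (refl a \<circ> g) = - sgnW g"
      by (simp add: sgnW_comp linear_refl refl_group_linear[OF step.hyps(1)] sgnW_refl)
    then show ?case using step.IH unfolding comp_def by simp
  qed
  then show ?thesis
    unfolding real_character_def by (simp add: sgnW_comp refl_group_linear)
qed

section \<open>Matrices indexed by a finite set\<close>

definition mat_adj :: "('v \<Rightarrow> 'v \<Rightarrow> complex) \<Rightarrow> 'v \<Rightarrow> 'v \<Rightarrow> complex" where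
  "mat_adj M = (\<lambda>u v. cnj (M v u))"

definition mat_comb :: "'g set \<Rightarrow> ('g \<Rightarrow> complex) \<Rightarrow> ('g \<Rightarrow> 'v \<Rightarrow> 'v \<Rightarrow> complex) \<Rightarrow> 'v \<Rightarrow> 'v \<Rightarrow> complex" where
  "mat_comb P c M = (\<lambda>u v. \<Sum>g\<in>P. c g * M g u v)"

lemma mat_mult_assoc: "mat_mult V (mat_mult V A B) C = mat_mult V A (mat_mult V B C)"
  unfolding mat_mult_def
  by (intro ext) (simp add: sum_distrib_left sum_distrib_right mult.assoc, rule sum.swap)

lemma mat_trace_mult_commute: "mat_trace V (mat_mult V A B) = mat_trace V (mat_mult V B A)"
  unfolding mat_trace_def mat_mult_def by (subst sum.swap) (simp add: mult.commute)

lemma mat_adj_mult: "mat_adj (mat_mult V A B) = mat_mult V (mat_adj B) (mat_adj A)"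
  unfolding mat_mult_def mat_adj_def by (simp add: mult.commute)

lemma mat_adj_comb: "mat_adj (mat_comb P c M) = mat_comb P (\<lambda>g. cnj (c g)) (\<lambda>g. mat_adj (M g))"
  unfolding mat_comb_def mat_adj_def by simp

lemma mat_mult_comb_left: "mat_mult V (mat_comb P c M) B = mat_comb P c (\<lambda>g. mat_mult V (M g) B)"
  unfolding mat_mult_def mat_comb_def
  by (intro ext) (simp add: sum_distrib_left sum_distrib_right mult.assoc sum.swap[of _ V P])

lemma mat_mult_comb_right: "mat_mult V A (mat_comb P c M) = mat_comb P c (\<lambda>g. mat_mult V A (M g))"
  unfolding mat_mult_def mat_comb_def
  by (intro ext) (simp add: sum_distrib_left mult.left_commute sum.swap[of _ V P])

lemma mat_comb_cong:
  "P = P' \<Longrightarrow> (\<And>g. g \<in> P' \<Longrightarrow> M g = M' g) \<Longrightarrow> mat_comb P c M = mat_comb P' c M'"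
  unfolding mat_comb_def by (auto intro: sum.cong)

lemma mat_mult_row:
  assumes "finite V" "v \<in> V" "\<And>w. w \<in> V \<Longrightarrow> A v w = c * mat_id v w"
  shows "mat_mult V A B v u = c * B v u"
proof -
  have "mat_mult V A B v u = (\<Sum>w\<in>V. if w = v then c * B v u else 0)"
    unfolding mat_mult_def using assms(3) by (intro sum.cong) (auto simp: mat_id_def)
  then show ?thesis using assms(1,2) by simp
qed

lemma mat_mult_col:
  assumes "finite V" "w \<in> V" "\<And>x. x \<in> V \<Longrightarrow> B x w = c * mat_id x w"
  shows "mat_mult V A B u w = c * A u w"
proof -
  have "mat_mult V A B u w = (\<Sum>x\<in>V. if x = w then c * A u w else 0)"
    unfolding mat_mult_def using assms(3) by (intro sum.cong) (auto simp: mat_id_def)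
  then show ?thesis using assms(1,2) by simp
qed

lemma mat_mult_id_right:
  assumes "finite V" "mat_eq_on V M mat_id" "v \<in> V"
  shows "mat_mult V A M u v = A u v"
proof -
  have "M x v = 1 * mat_id x v" if "x \<in> V" for x
    using assms(2,3) that by (simp add: mat_eq_on_def)
  from mat_mult_col[OF assms(1,3), where B = M and c = 1, OF this] show ?thesis by simp
qed

lemma mat_trace_mult_id_right:
  "finite V \<Longrightarrow> mat_eq_on V M mat_id \<Longrightarrow> mat_trace V (mat_mult V A M) = mat_trace V A"
  unfolding mat_trace_def by (simp add: mat_mult_id_right)

lemma mat_mult_eq_on_cong:
  "mat_eq_on V A A' \<Longrightarrow> mat_eq_on V B B' \<Longrightarrow> mat_eq_on V (mat_mult V A B) (mat_mult V A' B')"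
  unfolding mat_eq_on_def mat_mult_def by (auto intro!: sum.cong)

lemma mat_eq_on_trace_nonzero:
  assumes "mat_eq_on V M M'"
  shows "mat_trace V M = mat_trace V M'" "mat_nonzero V M = mat_nonzero V M'"
  using assms unfolding mat_eq_on_def mat_trace_def mat_nonzero_def by auto

section \<open>Positive definite Hermitian forms\<close>

definition sesq :: "'v set \<Rightarrow> ('v \<Rightarrow> 'v \<Rightarrow> complex) \<Rightarrow> ('v \<Rightarrow> complex) \<Rightarrow> ('v \<Rightarrow> complex) \<Rightarrow> complex" where
  "sesq V H x y = (\<Sum>u\<in>V. \<Sum>w\<in>V. cnj (x u) * H u w * y w)"

text \<open>Positivity uses the order of \<open>HOL-Library.Complex_Order\<close>: \<open>0 < z\<close> means that z is a
  positive real number.\<close>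
definition hermitian_pos_def :: "'v set \<Rightarrow> ('v \<Rightarrow> 'v \<Rightarrow> complex) \<Rightarrow> bool" where
  "hermitian_pos_def V H \<longleftrightarrow> (\<forall>u\<in>V. \<forall>w\<in>V. H w u = cnj (H u w)) \<and> (\<forall>x. (\<exists>u\<in>V. x u \<noteq> 0) \<longrightarrow> 0 < sesq V H x x)"

lemma sesq_diff_right: "sesq V H x (\<lambda>u. y u - z u) = sesq V H x y - sesq V H x z"
  unfolding sesq_def by (simp add: right_diff_distrib sum_subtractf)

lemma sesq_add_right: "sesq V H x (\<lambda>u. y u + z u) = sesq V H x y + sesq V H x z"
  unfolding sesq_def by (simp add: distrib_left sum.distrib)

lemma sesq_scale_right: "sesq V H x (\<lambda>u. c * y u) = c * sesq V H x y"
  unfolding sesq_def by (simp add: sum_distrib_left mult.left_commute)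

lemma sesq_scale_left: "sesq V H (\<lambda>u. c * x u) y = cnj c * sesq V H x y"
  unfolding sesq_def by (simp add: sum_distrib_left mult.assoc)

lemma sesq_sum_right: "sesq V H x (\<lambda>u. \<Sum>j\<in>S. c j * y j u) = (\<Sum>j\<in>S. c j * sesq V H x (y j))"
proof -
  have "sesq V H x (\<lambda>u. \<Sum>j\<in>S. c j * y j u) = (\<Sum>u\<in>V. \<Sum>w\<in>V. \<Sum>j\<in>S. c j * (cnj (x u) * H u w * y j w))"
    unfolding sesq_def by (simp add: sum_distrib_left mult.left_commute)
  also have "\<dots> = (\<Sum>u\<in>V. \<Sum>j\<in>S. \<Sum>w\<in>V. c j * (cnj (x u) * H u w * y j w))"
    by (rule sum.cong[OF refl], rule sum.swap)
  also have "\<dots> = (\<Sum>j\<in>S. \<Sum>u\<in>V. \<Sum>w\<in>V. c j * (cnj (x u) * H u w * y j w))"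
    by (rule sum.swap)
  finally show ?thesis unfolding sesq_def by (simp add: sum_distrib_left)
qed

lemma sesq_cong: "(\<And>u. u \<in> V \<Longrightarrow> y u = y' u) \<Longrightarrow> sesq V H x y = sesq V H x y'"
  unfolding sesq_def by (auto intro!: sum.cong)

lemma sesq_swap:
  assumes "\<And>u w. u \<in> V \<Longrightarrow> w \<in> V \<Longrightarrow> H w u = cnj (H u w)"
  shows "sesq V H y x = cnj (sesq V H x y)"
proof -
  have "sesq V H y x = (\<Sum>w\<in>V. \<Sum>u\<in>V. cnj (y u) * H u w * x w)"
    unfolding sesq_def by (rule sum.swap)
  also have "\<dots> = (\<Sum>w\<in>V. \<Sum>u\<in>V. cnj (cnj (x w) * H w u * y u))"
  proof (intro sum.cong refl)
    fix w u assume "w \<in> V" "u \<in> V"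
    then have "H u w = cnj (H w u)" using assms by blast
    then show "cnj (y u) * H u w * x w = cnj (cnj (x w) * H w u * y u)"
      by (simp add: mult.commute mult.left_commute)
  qed
  also have "\<dots> = cnj (sesq V H x y)"
    unfolding sesq_def by simp
  finally show ?thesis .
qed

lemma hermitian_pos_def_sesq_swap: "hermitian_pos_def V H \<Longrightarrow> sesq V H y x = cnj (sesq V H x y)"
  unfolding hermitian_pos_def_def by (blast intro: sesq_swap)

lemma sesq_pos: "hermitian_pos_def V H \<Longrightarrow> u \<in> V \<Longrightarrow> x u \<noteq> 0 \<Longrightarrow> 0 < sesq V H x x"
  unfolding hermitian_pos_def_def by blast

lemma sesq_nonneg: "hermitian_pos_def V H \<Longrightarrow> 0 \<le> sesq V H x x"
  by (cases "\<exists>u\<in>V. x u \<noteq> 0") (auto simp: sesq_def dest: sesq_pos intro: order_less_imp_le)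

lemma sesq_comb: "sesq V (mat_comb P c M) x y = (\<Sum>g\<in>P. c g * sesq V (M g) x y)"
proof -
  have "sesq V (mat_comb P c M) x y = (\<Sum>u\<in>V. \<Sum>w\<in>V. \<Sum>g\<in>P. c g * (cnj (x u) * M g u w * y w))"
    unfolding sesq_def mat_comb_def by (simp add: sum_distrib_left sum_distrib_right mult_ac)
  also have "\<dots> = (\<Sum>u\<in>V. \<Sum>g\<in>P. \<Sum>w\<in>V. c g * (cnj (x u) * M g u w * y w))"
    by (rule sum.cong[OF refl], rule sum.swap)
  also have "\<dots> = (\<Sum>g\<in>P. \<Sum>u\<in>V. \<Sum>w\<in>V. c g * (cnj (x u) * M g u w * y w))"
    by (rule sum.swap)
  finally show ?thesis unfolding sesq_def by (simp add: sum_distrib_left)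
qed

lemma sesq_adj_mult_self:
  "sesq V (mat_mult V (mat_adj A) A) x x = (\<Sum>y\<in>V. cnj (\<Sum>w\<in>V. A y w * x w) * (\<Sum>w\<in>V. A y w * x w))"
proof -
  have "sesq V (mat_mult V (mat_adj A) A) x x = (\<Sum>u\<in>V. \<Sum>w\<in>V. \<Sum>y\<in>V. cnj (A y u * x u) * (A y w * x w))"
    unfolding sesq_def mat_mult_def mat_adj_def by (simp add: sum_distrib_left sum_distrib_right mult_ac)
  also have "\<dots> = (\<Sum>u\<in>V. \<Sum>y\<in>V. \<Sum>w\<in>V. cnj (A y u * x u) * (A y w * x w))"
    by (rule sum.cong[OF refl], rule sum.swap)
  also have "\<dots> = (\<Sum>y\<in>V. \<Sum>u\<in>V. \<Sum>w\<in>V. cnj (A y u * x u) * (A y w * x w))"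
    by (rule sum.swap)
  finally show ?thesis by (simp add: sum_product)
qed

text \<open>The new vector f is the unit vector at a minus its projection onto the span of the \<open>e j\<close>.\<close>
lemma gram_schmidt_step:
  assumes H: "hermitian_pos_def V H" and S: "finite S" and a: "a \<notin> S"
    and e_supp: "\<And>j u. j \<in> S \<Longrightarrow> u \<notin> S \<Longrightarrow> e j u = 0"
    and e_orth: "\<And>i j. i \<in> S \<Longrightarrow> j \<in> S \<Longrightarrow> sesq V H (e i) (e j) = of_bool (i = j)"
    and e_span: "\<And>x u. \<forall>u\<in>V - S. x u = 0 \<Longrightarrow> u \<in> V \<Longrightarrow> x u = (\<Sum>j\<in>S. sesq V H (e j) x * e j u)"
  obtains f where "f a = 1" "\<And>u. u \<notin> insert a S \<Longrightarrow> f u = 0"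
    "\<And>j. j \<in> S \<Longrightarrow> sesq V H (e j) f = 0" "\<And>j. j \<in> S \<Longrightarrow> sesq V H f (e j) = 0"
    "\<And>x. \<forall>u\<in>V - insert a S. x u = 0 \<Longrightarrow> sesq V H f x = x a * sesq V H f f"
    "\<And>x u. \<forall>u\<in>V - insert a S. x u = 0 \<Longrightarrow> u \<in> V \<Longrightarrow> x u = (\<Sum>j\<in>S. sesq V H (e j) x * e j u) + x a * f u"
proof -
  define \<delta> where "\<delta> u = (of_bool (u = a) :: complex)" for u
  define c where "c j = sesq V H (e j) \<delta>" for j
  define f where "f u = \<delta> u - (\<Sum>j\<in>S. c j * e j u)" for u
  have e_f: "sesq V H (e i) f = 0" if "i \<in> S" for i
  proof -
    have "sesq V H (e i) f = c i - (\<Sum>j\<in>S. c j * of_bool (i = j))"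
      unfolding f_def[abs_def] sesq_diff_right sesq_sum_right c_def using e_orth that by simp
    then show ?thesis using that S by (simp add: of_bool_def if_distrib cong: if_cong)
  qed
  have f_e: "sesq V H f (e i) = 0" if "i \<in> S" for i
    using hermitian_pos_def_sesq_swap[OF H, of f "e i"] e_f[OF that] by simp
  have f_\<delta>: "sesq V H f \<delta> = sesq V H f f"
  proof -
    have "sesq V H f \<delta> = sesq V H f (\<lambda>v. f v + (\<Sum>j\<in>S. c j * e j v))"
      by (simp add: f_def)
    then show ?thesis by (simp add: sesq_add_right sesq_sum_right f_e)
  qed
  show thesis
  proof (rule that)
    show "f a = 1" using a e_supp by (simp add: f_def \<delta>_def)
    show "f u = 0" if "u \<notin> insert a S" for u using that e_supp by (simp add: f_def \<delta>_def)
  next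
    fix x :: "'a \<Rightarrow> complex" assume x: "\<forall>u\<in>V - insert a S. x u = 0"
    define y where "y v = x v - x a * \<delta> v" for v
    have y_span: "y v = (\<Sum>j\<in>S. sesq V H (e j) y * e j v)" if "v \<in> V" for v
      using e_span[OF _ that] x by (auto simp: y_def \<delta>_def)
    have x_eq: "x = (\<lambda>v. y v + x a * \<delta> v)" by (simp add: y_def)
    have f_y: "sesq V H f y = 0"
      using sesq_cong[of V y _ H f, OF y_span] by (simp add: sesq_sum_right f_e)
    show "sesq V H f x = x a * sesq V H f f"
      by (subst x_eq) (simp add: sesq_add_right sesq_scale_right f_y f_\<delta>)
    fix u assume u: "u \<in> V"
    have "(\<Sum>j\<in>S. sesq V H (e j) x * e j u) = y u + x a * (\<Sum>j\<in>S. c j * e j u)"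
      by (subst x_eq) (simp add: sesq_add_right sesq_scale_right c_def y_span[OF u],
          simp add: algebra_simps sum.distrib sum_distrib_left)
    then show "x u = (\<Sum>j\<in>S. sesq V H (e j) x * e j u) + x a * f u"
      by (simp add: y_def f_def algebra_simps)
  qed (use e_f f_e in auto)
qed

lemma orthonormal_basis_of_subset:
  assumes V: "finite V" and H: "hermitian_pos_def V H" and S: "S \<subseteq> V"
  shows "\<exists>e. (\<forall>j\<in>S. \<forall>u. u \<notin> S \<longrightarrow> e j u = 0)
           \<and> (\<forall>i\<in>S. \<forall>j\<in>S. sesq V H (e i) (e j) = of_bool (i = j))
           \<and> (\<forall>x. (\<forall>u\<in>V - S. x u = 0) \<longrightarrow> (\<forall>u\<in>V. x u = (\<Sum>j\<in>S. sesq V H (e j) x * e j u)))"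
  using finite_subset[OF S V] S
proof (induction S rule: finite_induct)
  case empty
  show ?case by auto
next
  case (insert a S)
  then obtain e where e: "\<forall>j\<in>S. \<forall>u. u \<notin> S \<longrightarrow> e j u = 0"
    "\<forall>i\<in>S. \<forall>j\<in>S. sesq V H (e i) (e j) = of_bool (i = j)"
    "\<forall>x. (\<forall>u\<in>V - S. x u = 0) \<longrightarrow> (\<forall>u\<in>V. x u = (\<Sum>j\<in>S. sesq V H (e j) x * e j u))"
    by auto
  obtain f where f: "f a = 1" "\<And>u. u \<notin> insert a S \<Longrightarrow> f u = 0"
    "\<And>j. j \<in> S \<Longrightarrow> sesq V H (e j) f = 0" "\<And>j. j \<in> S \<Longrightarrow> sesq V H f (e j) = 0"
    "\<And>x. \<forall>u\<in>V - insert a S. x u = 0 \<Longrightarrow> sesq V H f x = x a * sesq V H f f"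
    "\<And>x u. \<forall>u\<in>V - insert a S. x u = 0 \<Longrightarrow> u \<in> V \<Longrightarrow> x u = (\<Sum>j\<in>S. sesq V H (e j) x * e j u) + x a * f u"
    by (rule gram_schmidt_step[OF H insert.hyps(1,2), of e]) (use e in blast)+
  have "0 < sesq V H f f"
    using sesq_pos[OF H, of a f] insert.prems f(1) by simp
  then obtain s where s: "s > 0" "sesq V H f f = of_real (s * s)"
    by (intro that[of "sqrt (Re (sesq V H f f))"]) (auto simp: less_complex_def complex_eq_iff)
  define t where "t = complex_of_real (1 / s)"
  have t: "cnj t * t * sesq V H f f = 1" using s by (simp add: t_def)
  define e' where "e' = e(a := (\<lambda>u. t * f u))"
  have e'_e: "\<And>j. j \<in> S \<Longrightarrow> e' j = e j" and e'_a: "e' a = (\<lambda>u. t * f u)"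
    using insert.hyps(2) by (auto simp: e'_def)
  show ?case
  proof (intro exI[of _ e'] conjI ballI allI impI)
    fix j u assume "j \<in> insert a S" "u \<notin> insert a S"
    then show "e' j u = 0" using e(1) f(2) by (auto simp: e'_def)
  next
    fix i j assume "i \<in> insert a S" "j \<in> insert a S"
    then show "sesq V H (e' i) (e' j) = of_bool (i = j)"
      using insert.hyps(2) e(2) f(3,4) t
      by (auto simp: e'_e e'_a sesq_scale_left sesq_scale_right mult.assoc)
  next
    fix x :: "'a \<Rightarrow> complex" and u assume x: "\<forall>u\<in>V - insert a S. x u = 0" and u: "u \<in> V"
    have "sesq V H (e' a) x * e' a u = x a * f u"
      using t by (simp add: e'_a sesq_scale_left f(5)[OF x] mult_ac)
    then show "x u = (\<Sum>j\<in>insert a S. sesq V H (e' j) x * e' j u)"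
      using insert.hyps f(6)[OF x u] by (simp add: e'_e)
  qed
qed

lemma hermitian_pos_def_factorization:
  assumes V: "finite V" and H: "hermitian_pos_def V H"
  obtains E where "mat_eq_on V (mat_mult V E (mat_mult V (mat_adj E) H)) mat_id"
proof -
  obtain e where e_span: "\<And>x u. u \<in> V \<Longrightarrow> x u = (\<Sum>j\<in>V. sesq V H (e j) x * e j u)"
    using orthonormal_basis_of_subset[OF V H order_refl] by blast
  have "mat_mult V (mat_adj (\<lambda>u j. e j u)) H j v = sesq V H (e j) (\<lambda>w. mat_id w v)" if "v \<in> V" for j v
    unfolding mat_mult_def mat_adj_def sesq_def mat_id_def using V that by (simp add: if_distrib cong: if_cong)
  then have "mat_mult V (\<lambda>u j. e j u) (mat_mult V (mat_adj (\<lambda>u j. e j u)) H) u v = mat_id u v"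
    if "u \<in> V" "v \<in> V" for u v
    using e_span[OF that(1), of "\<lambda>w. mat_id w v"] that(2) by (simp add: mat_mult_def mult.commute)
  then show thesis by (intro that[of "\<lambda>u j. e j u"]) (simp add: mat_eq_on_def)
qed

text \<open>In an H-orthonormal basis E, \<open>tr (P P')\<close> is the sum of the squared H-norms of the columns
  of \<open>P E\<close>.\<close>
lemma mat_trace_mult_adjoint_eq_0_imp:
  assumes V: "finite V" and H: "hermitian_pos_def V H"
    and adj: "mat_mult V (mat_adj P) H = mat_mult V H P'"
    and tr: "mat_trace V (mat_mult V P P') = 0"
    and uv: "u \<in> V" "v \<in> V"
  shows "P u v = 0"
proof -
  obtain E where E: "mat_eq_on V (mat_mult V E (mat_mult V (mat_adj E) H)) mat_id"
    using hermitian_pos_def_factorization[OF V H] .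
  define Z where "Z = mat_mult V P E"
  have adj': "mat_mult V H (mat_mult V P' X) = mat_mult V (mat_adj P) (mat_mult V H X)" for X
    by (simp add: mat_mult_assoc[symmetric] adj)
  have "mat_trace V (mat_mult V P P')
      = mat_trace V (mat_mult V (mat_mult V P' P) (mat_mult V E (mat_mult V (mat_adj E) H)))"
    by (simp add: mat_trace_mult_commute[of V P] mat_trace_mult_id_right[OF V E])
  also have "\<dots> = mat_trace V (mat_mult V (mat_adj E) (mat_mult V H (mat_mult V (mat_mult V P' P) E)))"
    using mat_trace_mult_commute[of V "mat_mult V (mat_mult V P' P) E" "mat_mult V (mat_adj E) H"]
    by (simp add: mat_mult_assoc)
  also have "\<dots> = mat_trace V (mat_mult V (mat_adj Z) (mat_mult V H Z))"
    by (simp add: Z_def mat_adj_mult mat_mult_assoc adj')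
  also have "\<dots> = (\<Sum>j\<in>V. sesq V H (\<lambda>w. Z w j) (\<lambda>w. Z w j))"
    unfolding mat_trace_def mat_mult_def mat_adj_def sesq_def
    by (simp add: sum_distrib_left mult.assoc)
  finally have "(\<Sum>j\<in>V. sesq V H (\<lambda>w. Z w j) (\<lambda>w. Z w j)) = 0"
    using tr by simp
  then have sesq_0: "sesq V H (\<lambda>w. Z w j) (\<lambda>w. Z w j) = 0" if "j \<in> V" for j
    using sum_nonneg_eq_0_iff[OF V, of "\<lambda>j. sesq V H (\<lambda>w. Z w j) (\<lambda>w. Z w j)"]
      sesq_nonneg[OF H] that by simp
  have Z0: "Z w j = 0" if "w \<in> V" "j \<in> V" for w j
  proof (rule ccontr)
    assume "Z w j \<noteq> 0"
    then show False using sesq_pos[OF H that(1), of "\<lambda>w. Z w j"] sesq_0[OF that(2)] by simp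
  qed
  have "P u v = mat_mult V P (mat_mult V E (mat_mult V (mat_adj E) H)) u v"
    using mat_mult_id_right[OF V E uv(2)] by simp
  also have "\<dots> = mat_mult V Z (mat_mult V (mat_adj E) H) u v"
    by (simp add: Z_def mat_mult_assoc)
  also have "\<dots> = 0"
    unfolding mat_mult_def using Z0 uv(1) by simp
  finally show ?thesis .
qed

lemma mat_trace_mult_projections_eq_0_imp:
  assumes V: "finite V" and H: "hermitian_pos_def V H"
    and Q: "mat_mult V Q Q = Q" "mat_mult V (mat_adj Q) H = mat_mult V H Q"
    and R: "mat_mult V R R = R" "mat_mult V (mat_adj R) H = mat_mult V H R"
    and tr: "mat_trace V (mat_mult V Q R) = 0"
    and uv: "u \<in> V" "v \<in> V"
  shows "mat_mult V Q R u v = 0"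
proof (rule mat_trace_mult_adjoint_eq_0_imp[OF V H _ _ uv])
  have R': "mat_mult V (mat_adj R) (mat_mult V H X) = mat_mult V H (mat_mult V R X)" for X
    by (simp add: R(2) flip: mat_mult_assoc)
  show "mat_mult V (mat_adj (mat_mult V Q R)) H = mat_mult V H (mat_mult V R Q)"
    by (simp add: mat_adj_mult mat_mult_assoc Q(2) R')
  have "mat_trace V (mat_mult V (mat_mult V Q R) (mat_mult V R Q))
      = mat_trace V (mat_mult V Q (mat_mult V R Q))"
    by (metis R(1) mat_mult_assoc)
  also have "\<dots> = mat_trace V (mat_mult V Q R)"
    by (simp add: mat_trace_mult_commute[of V Q] mat_mult_assoc Q(1))
  finally show "mat_trace V (mat_mult V (mat_mult V Q R) (mat_mult V R Q)) = 0"
    using tr by simp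
qed

section \<open>Isotypic projections of a representation\<close>

definition iso_proj :: "(('a \<Rightarrow> 'a) \<Rightarrow> 'v \<Rightarrow> 'v \<Rightarrow> complex) \<Rightarrow> ('a \<Rightarrow> 'a) set \<Rightarrow> (('a \<Rightarrow> 'a) \<Rightarrow> real)
    \<Rightarrow> 'v \<Rightarrow> 'v \<Rightarrow> complex" where
  "iso_proj \<rho> P \<psi> = mat_comb P (\<lambda>g. of_real (\<psi> g) / of_nat (card P)) \<rho>"

locale finite_group_rep =
  fixes G :: "('a \<Rightarrow> 'a) set" and V :: "'v set" and \<rho> :: "('a \<Rightarrow> 'a) \<Rightarrow> 'v \<Rightarrow> 'v \<Rightarrow> complex"
  assumes group: "map_group G" and finite_V: "finite V"
    and rep_id: "mat_eq_on V (\<rho> id) mat_id"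
    and rep_comp: "g \<in> G \<Longrightarrow> h \<in> G \<Longrightarrow> \<rho> (g \<circ> h) = mat_mult V (\<rho> g) (\<rho> h)"
begin

text \<open>Weyl's unitary trick: every \<open>\<rho> g\<close> is unitary for this form.\<close>
definition inv_form :: "'v \<Rightarrow> 'v \<Rightarrow> complex" where
  "inv_form = mat_comb G (\<lambda>_. 1) (\<lambda>g. mat_mult V (mat_adj (\<rho> g)) (\<rho> g))"

lemma sesq_inv_form:
  "sesq V inv_form x x = of_real (\<Sum>g\<in>G. \<Sum>y\<in>V. (cmod (\<Sum>w\<in>V. \<rho> g y w * x w))\<^sup>2)"
proof -
  have "cnj z * z = of_real ((cmod z)\<^sup>2)" for z :: complex
    using complex_norm_square[of z] by (simp add: mult.commute)
  then show ?thesis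
    unfolding inv_form_def sesq_comb sesq_adj_mult_self by (simp only: mult_1 of_real_sum)
qed

lemma hermitian_pos_def_inv_form: "hermitian_pos_def V inv_form"
  unfolding hermitian_pos_def_def
proof (intro conjI ballI allI impI)
  show "inv_form w u = cnj (inv_form u w)" for u w
    unfolding inv_form_def mat_comb_def mat_mult_def mat_adj_def by (simp add: mult.commute)
next
  fix x :: "'v \<Rightarrow> complex" assume "\<exists>u\<in>V. x u \<noteq> 0"
  then obtain u where u: "u \<in> V" "x u \<noteq> 0" by blast
  have id: "id \<in> G" using group unfolding map_group_def by blast
  have "(\<Sum>w\<in>V. \<rho> id u w * x w) = (\<Sum>w\<in>V. if w = u then x w else 0)"
    using rep_id u(1) by (intro sum.cong) (auto simp: mat_eq_on_def mat_id_def)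
  then have "0 < (cmod (\<Sum>w\<in>V. \<rho> id u w * x w))\<^sup>2"
    using finite_V u by simp
  then have "0 < (\<Sum>y\<in>V. (cmod (\<Sum>w\<in>V. \<rho> id y w * x w))\<^sup>2)"
    using finite_V u(1) by (intro sum_pos2[of V u]) auto
  then have "0 < (\<Sum>g\<in>G. \<Sum>y\<in>V. (cmod (\<Sum>w\<in>V. \<rho> g y w * x w))\<^sup>2)"
    using group id unfolding map_group_def by (intro sum_pos2[of G id]) (auto intro: sum_nonneg)
  then show "0 < sesq V inv_form x x"
    unfolding sesq_inv_form by (simp add: less_complex_def)
qed

lemma rep_adj_mult_inv_form:
  assumes "h \<in> G"
  shows "mat_mult V (mat_adj (\<rho> h)) inv_form = mat_mult V inv_form (\<rho> (inv h))"
proof -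
  have G: "inv h \<in> G" "g \<circ> h \<in> G" "g \<circ> h \<circ> inv h = g" if "g \<in> G" for g
    using map_group_inv[OF group assms] map_group_comp[OF group that assms]
    by (auto simp: o_assoc[symmetric])
  have "mat_mult V (mat_adj (\<rho> h)) inv_form
      = mat_comb G (\<lambda>_. 1) (\<lambda>g. mat_mult V (mat_adj (\<rho> (g \<circ> h))) (\<rho> g))"
    unfolding inv_form_def mat_mult_comb_right
    by (simp add: rep_comp assms mat_adj_mult mat_mult_assoc cong: mat_comb_cong)
  also have "\<dots> = mat_comb G (\<lambda>_. 1) (\<lambda>g. mat_mult V (mat_adj (\<rho> g)) (\<rho> (g \<circ> inv h)))"
    unfolding mat_comb_def
    using map_group_sum_comp_right[OF group assms, of "\<lambda>g. mat_mult V (mat_adj (\<rho> g)) (\<rho> (g \<circ> inv h)) _ _"]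
    by (simp add: G)
  also have "\<dots> = mat_mult V inv_form (\<rho> (inv h))"
    unfolding inv_form_def mat_mult_comb_left
    by (simp add: rep_comp G mat_mult_assoc cong: mat_comb_cong)
  finally show ?thesis .
qed

context
  fixes P :: "('a \<Rightarrow> 'a) set" and \<psi> :: "('a \<Rightarrow> 'a) \<Rightarrow> real"
  assumes P: "map_group P" "P \<subseteq> G" and \<psi>: "real_character P \<psi>"
begin

lemma rep_mult_iso_proj:
  assumes "h \<in> P"
  shows "mat_mult V (\<rho> h) (iso_proj \<rho> P \<psi>) = (\<lambda>u v. of_real (\<psi> h) * iso_proj \<rho> P \<psi> u v)"
proof (intro ext)
  fix u v
  let ?c = "\<lambda>g. complex_of_real (\<psi> g) / of_nat (card P)"
  have "mat_mult V (\<rho> h) (iso_proj \<rho> P \<psi>) u v = (\<Sum>g\<in>P. ?c g * \<rho> (h \<circ> g) u v)"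
    unfolding iso_proj_def mat_mult_comb_right unfolding mat_comb_def
    using P assms by (intro sum.cong) (auto simp: rep_comp subset_iff)
  also have "\<dots> = of_real (\<psi> h) * (\<Sum>g\<in>P. ?c (h \<circ> g) * \<rho> (h \<circ> g) u v)"
    unfolding sum_distrib_left
    using real_character_comp_left[OF \<psi> _ assms] by (intro sum.cong) (auto simp: mult.assoc)
  also have "\<dots> = of_real (\<psi> h) * iso_proj \<rho> P \<psi> u v"
    unfolding iso_proj_def mat_comb_def
    using map_group_sum_comp_left[OF P(1) assms, of "\<lambda>g. ?c g * \<rho> g u v"] by simp
  finally show "mat_mult V (\<rho> h) (iso_proj \<rho> P \<psi>) u v = of_real (\<psi> h) * iso_proj \<rho> P \<psi> u v" .
qed

lemma iso_proj_mult_rep: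
  assumes "h \<in> P"
  shows "mat_mult V (iso_proj \<rho> P \<psi>) (\<rho> h) = (\<lambda>u v. of_real (\<psi> h) * iso_proj \<rho> P \<psi> u v)"
proof (intro ext)
  fix u v
  let ?c = "\<lambda>g. complex_of_real (\<psi> g) / of_nat (card P)"
  have "mat_mult V (iso_proj \<rho> P \<psi>) (\<rho> h) u v = (\<Sum>g\<in>P. ?c g * \<rho> (g \<circ> h) u v)"
    unfolding iso_proj_def mat_mult_comb_left unfolding mat_comb_def
    using P assms by (intro sum.cong) (auto simp: rep_comp subset_iff)
  also have "\<dots> = of_real (\<psi> h) * (\<Sum>g\<in>P. ?c (g \<circ> h) * \<rho> (g \<circ> h) u v)"
    unfolding sum_distrib_left
    using real_character_comp_right[OF \<psi> _ assms] by (intro sum.cong) (auto simp: mult_ac)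
  also have "\<dots> = of_real (\<psi> h) * iso_proj \<rho> P \<psi> u v"
    unfolding iso_proj_def mat_comb_def
    using map_group_sum_comp_right[OF P(1) assms, of "\<lambda>g. ?c g * \<rho> g u v"] by simp
  finally show "mat_mult V (iso_proj \<rho> P \<psi>) (\<rho> h) u v = of_real (\<psi> h) * iso_proj \<rho> P \<psi> u v" .
qed

lemma iso_proj_idem: "mat_mult V (iso_proj \<rho> P \<psi>) (iso_proj \<rho> P \<psi>) = iso_proj \<rho> P \<psi>"
proof -
  let ?c = "\<lambda>g. complex_of_real (\<psi> g) / of_nat (card P)"
  have "card P \<noteq> 0" using P(1) unfolding map_group_def by auto
  have "mat_mult V (iso_proj \<rho> P \<psi>) (iso_proj \<rho> P \<psi>)
      = mat_comb P ?c (\<lambda>g. mat_mult V (iso_proj \<rho> P \<psi>) (\<rho> g))"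
    by (subst (2) iso_proj_def) (rule mat_mult_comb_right)
  also have "\<dots> = mat_comb P ?c (\<lambda>g u v. of_real (\<psi> g) * iso_proj \<rho> P \<psi> u v)"
    by (rule mat_comb_cong) (simp_all add: iso_proj_mult_rep)
  also have "\<dots> = iso_proj \<rho> P \<psi>"
  proof (intro ext)
    fix u v
    have "complex_of_real (\<psi> g) * of_real (\<psi> g) = 1" if "g \<in> P" for g
      using real_character_mult_self[OF \<psi> that] by (metis of_real_1 of_real_mult)
    then have "(\<Sum>g\<in>P. ?c g * (of_real (\<psi> g) * iso_proj \<rho> P \<psi> u v))
        = (\<Sum>g\<in>P. iso_proj \<rho> P \<psi> u v / of_nat (card P))"
      by (intro sum.cong) (simp_all add: field_simps)
    then show "mat_comb P ?c (\<lambda>g u v. of_real (\<psi> g) * iso_proj \<rho> P \<psi> u v) u v = iso_proj \<rho> P \<psi> u v"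
      using \<open>card P \<noteq> 0\<close> by (simp add: mat_comb_def)
  qed
  finally show ?thesis .
qed

lemma iso_proj_adj_mult_inv_form:
  "mat_mult V (mat_adj (iso_proj \<rho> P \<psi>)) inv_form = mat_mult V inv_form (iso_proj \<rho> P \<psi>)"
proof -
  let ?c = "\<lambda>g. complex_of_real (\<psi> g) / of_nat (card P)"
  have "mat_mult V (mat_adj (iso_proj \<rho> P \<psi>)) inv_form
      = mat_comb P ?c (\<lambda>g. mat_mult V inv_form (\<rho> (inv g)))"
    unfolding iso_proj_def mat_adj_comb mat_mult_comb_left
    using P by (intro ext) (auto simp: mat_comb_def rep_adj_mult_inv_form intro!: sum.cong)
  also have "\<dots> = mat_comb P (\<lambda>g. ?c (inv g)) (\<lambda>g. mat_mult V inv_form (\<rho> (inv g)))"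
    unfolding mat_comb_def using real_character_inv[OF P(1) \<psi>] by (intro ext sum.cong) auto
  also have "\<dots> = mat_comb P ?c (\<lambda>g. mat_mult V inv_form (\<rho> g))"
    unfolding mat_comb_def by (intro ext) (rule map_group_sum_inv[OF P(1)])
  also have "\<dots> = mat_mult V inv_form (iso_proj \<rho> P \<psi>)"
    unfolding iso_proj_def mat_mult_comb_right ..
  finally show ?thesis .
qed

lemma iso_proj_entry:
  assumes "\<And>g. g \<in> P \<Longrightarrow> \<rho> g u v = of_real (\<psi> g) * mat_id u v"
  shows "iso_proj \<rho> P \<psi> u v = mat_id u v"
proof -
  have "card P \<noteq> 0" using P(1) unfolding map_group_def by auto
  have "complex_of_real (\<psi> g) * of_real (\<psi> g) = 1" if "g \<in> P" for g
    using real_character_mult_self[OF \<psi> that] by (metis of_real_1 of_real_mult)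
  then have "iso_proj \<rho> P \<psi> u v = (\<Sum>g\<in>P. mat_id u v / of_nat (card P))"
    unfolding iso_proj_def mat_comb_def using assms by (intro sum.cong) (simp_all add: field_simps)
  then show ?thesis using \<open>card P \<noteq> 0\<close> by simp
qed

end

lemma iso_proj_mult_eq_0_if_trace_eq_0:
  assumes "map_group P" "P \<subseteq> G" "real_character P \<psi>"
    and "map_group P'" "P' \<subseteq> G" "real_character P' \<psi>'"
    and "mat_trace V (mat_mult V (iso_proj \<rho> P \<psi>) (iso_proj \<rho> P' \<psi>')) = 0"
    and "u \<in> V" "v \<in> V"
  shows "mat_mult V (iso_proj \<rho> P \<psi>) (iso_proj \<rho> P' \<psi>') u v = 0"
  using assms
  by (intro mat_trace_mult_projections_eq_0_imp[OF finite_V hermitian_pos_def_inv_form]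
      iso_proj_idem iso_proj_adj_mult_inv_form)

end

section \<open>Weak W-graphs\<close>

lemma Qop_eq_iso_proj: "Qop \<rho> B = iso_proj \<rho> (parabolic B) (\<lambda>_. 1)"
  unfolding Qop_def iso_proj_def mat_comb_def by (simp add: sum_distrib_left)

lemma Rop_eq_iso_proj: "Rop \<rho> B = iso_proj \<rho> (parabolic B) sgnW"
  unfolding Rop_def iso_proj_def mat_comb_def by (simp add: sum_distrib_left)

lemma Qop_Rop_eq_on_cong:
  assumes "\<And>g. mat_eq_on V (\<rho> g) (\<rho>' g)"
  shows "mat_eq_on V (Qop \<rho> B) (Qop \<rho>' B)" "mat_eq_on V (Rop \<rho> B) (Rop \<rho>' B)"
  using assms unfolding mat_eq_on_def Qop_def Rop_def by simp_all

lemma wg_gen_row: "\<alpha> \<notin> \<tau> v \<Longrightarrow> wg_gen m \<tau> \<alpha> v w = mat_id v w"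
  unfolding wg_gen_def mat_id_def by auto

lemma wg_gen_col: "\<alpha> \<in> \<tau> w \<Longrightarrow> wg_gen m \<tau> \<alpha> u w = - mat_id u w"
  unfolding wg_gen_def mat_id_def by auto

locale weak_W_graph_rep = finite_group_rep "refl_group \<Delta>" V \<rho>
  for \<Delta> :: "(real^'n) set" and V :: "'v set" and \<rho> +
  fixes m :: "'v \<Rightarrow> 'v \<Rightarrow> complex" and \<tau> :: "'v \<Rightarrow> (real^'n) set"
  assumes zero_notin_simple: "0 \<notin> \<Delta>"
    and tau_subset: "v \<in> V \<Longrightarrow> \<tau> v \<subseteq> \<Delta>"
    and rep_refl: "\<alpha> \<in> \<Delta> \<Longrightarrow> u \<in> V \<Longrightarrow> v \<in> V \<Longrightarrow> \<rho> (refl \<alpha>) u v = wg_gen m \<tau> \<alpha> u v"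
begin

lemma parabolic_subgroup:
  assumes "B \<subseteq> \<Delta>"
  shows "map_group (parabolic B)" "parabolic B \<subseteq> parabolic \<Delta>"
proof -
  show sub: "parabolic B \<subseteq> parabolic \<Delta>" using refl_group_mono assms by blast
  have "finite (parabolic \<Delta>)" using group unfolding map_group_def by blast
  then show "map_group (parabolic B)"
    using map_group_refl_group finite_subset[OF sub] zero_notin_simple assms by blast
qed

lemma rep_refl_comp:
  assumes "\<alpha> \<in> B" "B \<subseteq> \<Delta>" "g \<in> parabolic B"
  shows "\<rho> (refl \<alpha> \<circ> g) = mat_mult V (\<rho> (refl \<alpha>)) (\<rho> g)"
  using assms refl_in_refl_group refl_group_mono by (intro rep_comp) blast+

lemma rep_row_eq_id:
  assumes K: "K \<subseteq> \<Delta>" and v: "v \<in> V" "\<tau> v \<inter> K = {}" and g: "g \<in> parabolic K" and u: "u \<in> V"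
  shows "\<rho> g v u = mat_id v u"
  using g u
proof (induction g arbitrary: u rule: refl_group.induct)
  case id_in
  then show ?case using rep_id v(1) unfolding mat_eq_on_def id_def by simp
next
  case (step g \<alpha>)
  have "\<rho> (refl \<alpha> \<circ> g) v u = mat_mult V (\<rho> (refl \<alpha>)) (\<rho> g) v u"
    using rep_refl_comp[OF step.hyps(2) K step.hyps(1)] by simp
  also have "\<dots> = \<rho> g v u"
  proof (subst mat_mult_row[OF finite_V v(1), where c = 1])
    have "\<alpha> \<in> \<Delta>" "\<alpha> \<notin> \<tau> v" using step.hyps(2) K v(2) by auto
    then show "\<rho> (refl \<alpha>) v w = 1 * mat_id v w" if "w \<in> V" for w
      using v(1) that by (simp add: rep_refl wg_gen_row)
  qed simp
  finally show ?case using step.IH step.prems unfolding comp_def by simp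
qed

lemma rep_col_eq_sgnW:
  assumes A: "A \<subseteq> \<Delta>" and v: "v \<in> V" "A \<subseteq> \<tau> v" and g: "g \<in> parabolic A" and u: "u \<in> V"
  shows "\<rho> g u v = of_real (sgnW g) * mat_id u v"
  using g u
proof (induction g arbitrary: u rule: refl_group.induct)
  case id_in
  then show ?case using rep_id v(1) unfolding sgnW_id unfolding mat_eq_on_def id_def by simp
next
  case (step g \<alpha>)
  have "\<alpha> \<noteq> 0" using step.hyps(2) A zero_notin_simple by blast
  have "\<rho> (refl \<alpha> \<circ> g) u v = mat_mult V (\<rho> (refl \<alpha>)) (\<rho> g) u v"
    using rep_refl_comp[OF step.hyps(2) A step.hyps(1)] by simp
  also have "\<dots> = of_real (sgnW g) * \<rho> (refl \<alpha>) u v"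
    using finite_V v step.IH by (subst mat_mult_col) auto
  also have "\<dots> = - of_real (sgnW g) * mat_id u v"
    using step.hyps(2) A v step.prems by (simp add: rep_refl wg_gen_col subset_iff)
  also have "sgnW (refl \<alpha> \<circ> g) = - sgnW g"
    using \<open>\<alpha> \<noteq> 0\<close> by (simp add: sgnW_comp linear_refl refl_group_linear[OF step.hyps(1)] sgnW_refl)
  ultimately show ?case unfolding comp_def by simp
qed

lemma Qop_row_eq_id:
  assumes "K \<subseteq> \<Delta>" "v \<in> V" "\<tau> v \<inter> K = {}" "u \<in> V"
  shows "Qop \<rho> K v u = mat_id v u"
  unfolding Qop_eq_iso_proj using parabolic_subgroup[OF assms(1)] rep_row_eq_id[OF assms(1-3) _ assms(4)]
  by (intro iso_proj_entry real_character_one) auto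

lemma Rop_col_eq_id:
  assumes "A \<subseteq> \<Delta>" "v \<in> V" "A \<subseteq> \<tau> v" "u \<in> V"
  shows "Rop \<rho> A u v = mat_id u v"
  unfolding Rop_eq_iso_proj using parabolic_subgroup[OF assms(1)] rep_col_eq_sgnW[OF assms(1-3) _ assms(4)]
    real_character_sgnW zero_notin_simple assms(1)
  by (intro iso_proj_entry) auto

lemma Rop_row_eq_0:
  assumes A: "A \<subseteq> \<Delta>" and \<alpha>: "\<alpha> \<in> A" and u: "u \<in> V" "\<alpha> \<notin> \<tau> u"
  shows "Rop \<rho> A u v = 0"
proof -
  have \<alpha>\<Delta>: "\<alpha> \<in> \<Delta>" "\<alpha> \<noteq> 0" using A \<alpha> zero_notin_simple by auto
  have "mat_mult V (\<rho> (refl \<alpha>)) (Rop \<rho> A) u v = 1 * Rop \<rho> A u v"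
    using \<alpha>\<Delta> u by (intro mat_mult_row[OF finite_V u(1)]) (simp add: rep_refl wg_gen_row)
  moreover have "mat_mult V (\<rho> (refl \<alpha>)) (Rop \<rho> A) u v = - Rop \<rho> A u v"
    unfolding Rop_eq_iso_proj
    using parabolic_subgroup[OF A] real_character_sgnW[of A] A zero_notin_simple
    by (subst rep_mult_iso_proj) (auto simp: refl_in_refl_group[OF \<alpha>] sgnW_refl[OF \<alpha>\<Delta>(2)])
  ultimately show ?thesis by simp
qed

lemma Qop_col_eq_0:
  assumes K: "K \<subseteq> \<Delta>" and \<beta>: "\<beta> \<in> K" and w: "w \<in> V" "\<beta> \<in> \<tau> w"
  shows "Qop \<rho> K u w = 0"
proof -
  have "\<beta> \<in> \<Delta>" using K \<beta> by auto
  then have "mat_mult V (Qop \<rho> K) (\<rho> (refl \<beta>)) u w = - 1 * Qop \<rho> K u w"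
    using w by (intro mat_mult_col[OF finite_V w(1)]) (simp add: rep_refl wg_gen_col)
  moreover have "mat_mult V (Qop \<rho> K) (\<rho> (refl \<beta>)) u w = Qop \<rho> K u w"
    unfolding Qop_eq_iso_proj using parabolic_subgroup[OF K]
    by (subst iso_proj_mult_rep) (auto simp: refl_in_refl_group[OF \<beta>] real_character_one)
  ultimately show ?thesis by simp
qed

context
  fixes A assumes A: "A \<subseteq> \<Delta>"
begin

lemma Qop_Rop_diag:
  assumes v: "v \<in> V" "\<tau> v = A"
  shows "mat_mult V (Qop \<rho> (\<Delta> - A)) (Rop \<rho> A) v v = 1"
proof -
  have "Qop \<rho> (\<Delta> - A) v w = 1 * mat_id v w" if "w \<in> V" for w
    using Qop_row_eq_id[of "\<Delta> - A" v w] v that by auto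
  then have "mat_mult V (Qop \<rho> (\<Delta> - A)) (Rop \<rho> A) v v = 1 * Rop \<rho> A v v"
    by (rule mat_mult_row[OF finite_V v(1)])
  also have "\<dots> = 1" using Rop_col_eq_id[OF A v(1) _ v(1)] v by (simp add: mat_id_def)
  finally show ?thesis .
qed

lemma Qop_Rop_nonzero_imp:
  assumes "mat_mult V (Qop \<rho> (\<Delta> - A)) (Rop \<rho> A) u v \<noteq> 0"
  shows "\<exists>w\<in>V. \<tau> w = A"
proof -
  obtain w where w: "w \<in> V" "Qop \<rho> (\<Delta> - A) u w * Rop \<rho> A w v \<noteq> 0"
    using assms unfolding mat_mult_def by (meson sum.not_neutral_contains_not_neutral)
  have "A \<subseteq> \<tau> w" using Rop_row_eq_0[OF A _ w(1)] w(2) by fastforce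
  moreover have "\<tau> w \<subseteq> A"
    using Qop_col_eq_0[of "\<Delta> - A" _ w] tau_subset[OF w(1)] w by fastforce
  ultimately show ?thesis using w(1) by blast
qed

theorem exists_tau_eq_iff:
  "((\<exists>v\<in>V. \<tau> v = A) \<longleftrightarrow> mat_nonzero V (mat_mult V (Qop \<rho> (\<Delta> - A)) (Rop \<rho> A)))
 \<and> ((\<exists>v\<in>V. \<tau> v = A) \<longleftrightarrow> mat_trace V (mat_mult V (Qop \<rho> (\<Delta> - A)) (Rop \<rho> A)) \<noteq> 0)
 \<and> ((\<exists>v\<in>V. \<tau> v = A) \<longleftrightarrow> mat_trace V (mat_mult V (Rop \<rho> A) (Qop \<rho> (\<Delta> - A))) \<noteq> 0)"
proof -
  let ?QR = "mat_mult V (Qop \<rho> (\<Delta> - A)) (Rop \<rho> A)"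
  have K: "\<Delta> - A \<subseteq> \<Delta>" by blast
  have "mat_trace V ?QR \<noteq> 0" if v: "v \<in> V" "\<tau> v = A" for v
  proof
    assume "mat_trace V ?QR = 0"
    then have "?QR v v = 0"
      unfolding Qop_eq_iso_proj Rop_eq_iso_proj
      using parabolic_subgroup[OF K] parabolic_subgroup[OF A] real_character_one
        real_character_sgnW[of A] A zero_notin_simple v(1)
      by (intro iso_proj_mult_eq_0_if_trace_eq_0) auto
    then show False using Qop_Rop_diag[OF v] by simp
  qed
  moreover have "mat_trace V ?QR \<noteq> 0 \<Longrightarrow> mat_nonzero V ?QR"
    unfolding mat_trace_def mat_nonzero_def by (meson sum.not_neutral_contains_not_neutral)
  moreover have "mat_nonzero V ?QR \<Longrightarrow> \<exists>v\<in>V. \<tau> v = A"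
    unfolding mat_nonzero_def using Qop_Rop_nonzero_imp by blast
  ultimately show ?thesis
    using mat_trace_mult_commute[of V "Rop \<rho> A" "Qop \<rho> (\<Delta> - A)"] by auto
qed

end

end

text \<open>\<open>wg_rep\<close> constrains only the entries indexed by V; cutting the representation down to
  \<open>V \<times> V\<close> turns its laws into equations between functions.\<close>
definition restrict_rep :: "'v set \<Rightarrow> ('g \<Rightarrow> 'v \<Rightarrow> 'v \<Rightarrow> complex) \<Rightarrow> 'g \<Rightarrow> 'v \<Rightarrow> 'v \<Rightarrow> complex" where
  "restrict_rep V \<rho> g u v = (if u \<in> V \<and> v \<in> V then \<rho> g u v else 0)"

lemma restrict_rep_eq_on: "mat_eq_on V (restrict_rep V \<rho> g) (\<rho> g)"
  by (simp add: restrict_rep_def mat_eq_on_def)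

lemma weak_W_graph_rep_restrict_rep:
  assumes "root_system \<Phi>" "simple_system \<Phi> \<Delta>" "weak_W_graph \<Phi> \<Delta> V m \<tau>" "wg_rep \<Phi> \<Delta> V m \<tau> \<rho>"
  shows "weak_W_graph_rep \<Delta> V (restrict_rep V \<rho>) m \<tau>"
proof
  have \<Delta>: "\<Delta> \<subseteq> \<Phi>" "0 \<notin> \<Delta>"
    using assms(1,2) unfolding root_system_def simple_system_def by auto
  show "map_group (parabolic \<Delta>)"
    using finite_subset[OF _ finite_weyl_group[OF assms(1)]] refl_group_mono[OF _ \<Delta>(1)]
    by (intro map_group_refl_group \<Delta>(2)) blast
  show "0 \<notin> \<Delta>" by (fact \<Delta>(2))
  show "finite V" "\<And>v. v \<in> V \<Longrightarrow> \<tau> v \<subseteq> \<Delta>"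
    using assms(3) unfolding weak_W_graph_def by auto
  show "mat_eq_on V (restrict_rep V \<rho> id) mat_id"
    using assms(4) unfolding wg_rep_def mat_eq_on_def by (simp add: restrict_rep_def)
  show "restrict_rep V \<rho> (g \<circ> h) = mat_mult V (restrict_rep V \<rho> g) (restrict_rep V \<rho> h)"
    if "g \<in> parabolic \<Delta>" "h \<in> parabolic \<Delta>" for g h
    using assms(4) refl_group_mono[OF that(1) \<Delta>(1)] refl_group_mono[OF that(2) \<Delta>(1)]
    unfolding wg_rep_def mat_eq_on_def by (intro ext) (auto simp: restrict_rep_def mat_mult_def)
  show "restrict_rep V \<rho> (refl \<alpha>) u v = wg_gen m \<tau> \<alpha> u v" if "\<alpha> \<in> \<Delta>" "u \<in> V" "v \<in> V" for \<alpha> u v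
    using assms(4) that unfolding wg_rep_def mat_eq_on_def by (simp add: restrict_rep_def)
qed

theorem theorem2p10:
  fixes \<Phi> \<Delta> A :: "(real^'n) set"
    and V :: "'v set" and m :: "'v \<Rightarrow> 'v \<Rightarrow> complex" and \<tau> :: "'v \<Rightarrow> (real^'n) set"
    and \<rho> :: "(real^'n \<Rightarrow> real^'n) \<Rightarrow> 'v \<Rightarrow> 'v \<Rightarrow> complex"
  assumes "root_system \<Phi>" and "simple_system \<Phi> \<Delta>"
    and "weak_W_graph \<Phi> \<Delta> V m \<tau>"
    and "wg_rep \<Phi> \<Delta> V m \<tau> \<rho>"
    and "A \<subseteq> \<Delta>"
  shows "((\<exists>v\<in>V. \<tau> v = A) \<longleftrightarrow> mat_nonzero V (mat_mult V (Qop \<rho> (\<Delta> - A)) (Rop \<rho> A)))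
       \<and> ((\<exists>v\<in>V. \<tau> v = A) \<longleftrightarrow> mat_trace V (mat_mult V (Qop \<rho> (\<Delta> - A)) (Rop \<rho> A)) \<noteq> 0)
       \<and> ((\<exists>v\<in>V. \<tau> v = A) \<longleftrightarrow> mat_trace V (mat_mult V (Rop \<rho> A) (Qop \<rho> (\<Delta> - A))) \<noteq> 0)"
proof -
  interpret weak_W_graph_rep \<Delta> V "restrict_rep V \<rho>" m \<tau>
    using weak_W_graph_rep_restrict_rep[OF assms(1-4)] .
  let ?QR = "\<lambda>\<sigma>. mat_mult V (Qop \<sigma> (\<Delta> - A)) (Rop \<sigma> A)"
  let ?RQ = "\<lambda>\<sigma>. mat_mult V (Rop \<sigma> A) (Qop \<sigma> (\<Delta> - A))"
  have "mat_eq_on V (?QR (restrict_rep V \<rho>)) (?QR \<rho>)" "mat_eq_on V (?RQ (restrict_rep V \<rho>)) (?RQ \<rho>)"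
    by (intro mat_mult_eq_on_cong Qop_Rop_eq_on_cong restrict_rep_eq_on)+
  then have eqs: "mat_nonzero V (?QR (restrict_rep V \<rho>)) = mat_nonzero V (?QR \<rho>)"
    "mat_trace V (?QR (restrict_rep V \<rho>)) = mat_trace V (?QR \<rho>)"
    "mat_trace V (?RQ (restrict_rep V \<rho>)) = mat_trace V (?RQ \<rho>)"
    by (simp_all add: mat_eq_on_trace_nonzero)
  show ?thesis
    using exists_tau_eq_iff[OF assms(5)] unfolding eqs .
qed

end
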